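(* Let $\tilde p\in\mathbb{R}^{dn}$ be a target formation (i.e. $\|\tilde p_i-\tilde p_j\|=d_{ij}$ for all $(i,j)\in\mathcal{E}$ and $\tilde p_j-\tilde p_i=\hat p_j-\hat p_i$ for all $(i,j)\in\mathcal{E}_o$) which is infinitesimally rigid, and suppose the orientation edges are selected as follows: all edges of $\mathcal{E}_o$ are incident to a common agent $i_0$; if $d=2$, $\mathcal{E}_o\neq\emptyset$; if $d=3$, $\mathcal{E}_o$ contains two edges $(i_0,j),(i_0,j')$ whose desired vectors $\hat p_j-\hat p_{i_0}$ and $\hat p_{j'}-\hat p_{i_0}$ are linearly independent. Then the matrix \[ \mathcal{F}:=R(\tilde p)^TR(\tilde p)+L_o\otimes I_d \] is positive semidefinite and has exactly $d$ zero eigenvalues; moreover $\mathrm{null}(\mathcal{F})=\mathrm{null}(H\otimes I_d)=\mathrm{span}(\mathbf{1}_n\otimes I_d)$ (the column span of $\mathbf{1}_n\otimes I_d$).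
   Context: Let $d\in\{2,3\}$, $n\ge2$. $\mathcal{G}=(\mathcal{V},\mathcal{E})$ is an undirected graph on $\{1,\dots,n\}$ with $m$ edges, each edge $k$ given an arbitrary orientation (head $j$, tail $i$); $H\in\mathbb{R}^{m\times n}$ is the incidence matrix ($h_{ki}=1$ if edge $k$ sinks at $i$, $-1$ if it leaves $i$, $0$ otherwise). For $p\in\mathbb{R}^{dn}$, $z=(H\otimes I_d)p$ with $z_k=p_j-p_i$, $Z(z)=\mathrm{diag}(z_1,\dots,z_m)\in\mathbb{R}^{dm\times m}$ block diagonal, and the rigidity matrix is $R(p)=Z(z)^T(H\otimes I_d)$. The framework $(\mathcal{G},p)$ is infinitesimally rigid iff $\mathrm{rank}\,R(p)=dn-d(d+1)/2$. Edges carry desired distances $d_{ij}>0$. $\mathcal{E}_o\subseteq\mathcal{E}$ is a set of orientation edges, $L_o$ the Laplacian of the undirected graph $(\mathcal{V},\mathcal{E}_o)$, and for each $(i,j)\in\mathcal{E}_o$ a desired relative vector $\hat p_j-\hat p_i\in\mathbb{R}^d$ with $\|\hat p_j-\hat p_i\|=d_{ij}$ is prescribed. $\mathbf{1}_n$ is the all-ones vector. *)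

theory Defs
  imports "Jordan_Normal_Form.Jordan_Normal_Form" "Jordan_Normal_Form.DL_Rank" "Jordan_Normal_Form.Matrix_Kernel"
begin

definition kron :: "'a::times mat \<Rightarrow> 'a mat \<Rightarrow> 'a mat" where
  "kron A B = mat (dim_row A * dim_row B) (dim_col A * dim_col B)
     (\<lambda>(i,j). A $$ (i div dim_row B, j div dim_col B) * B $$ (i mod dim_row B, j mod dim_col B))"

text \<open>Vertices are 0..n-1. Edge k of the list E is the pair (tail i, head j).
  Incidence matrix: entry 1 at the head (sink), -1 at the tail.\<close>
definition incidence :: "nat \<Rightarrow> (nat \<times> nat) list \<Rightarrow> real mat" where
  "incidence n E = mat (length E) n
     (\<lambda>(k,i). if i = snd (E ! k) then 1 else if i = fst (E ! k) then -1 else 0)"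

definition agent_pos :: "nat \<Rightarrow> real vec \<Rightarrow> nat \<Rightarrow> real vec" where
  "agent_pos d p i = vec d (\<lambda>a. p $ (i * d + a))"

definition edge_vec :: "nat \<Rightarrow> (nat \<times> nat) list \<Rightarrow> real vec \<Rightarrow> nat \<Rightarrow> real vec" where
  "edge_vec d E p k = agent_pos d p (snd (E ! k)) - agent_pos d p (fst (E ! k))"

text \<open>Z(z) = diag(z_1,...,z_m), a (d m) x m block diagonal matrix.\<close>
definition Zmat :: "nat \<Rightarrow> (nat \<times> nat) list \<Rightarrow> real vec \<Rightarrow> real mat" where
  "Zmat d E p = mat (d * length E) (length E)
     (\<lambda>(r,c). if r div d = c then edge_vec d E p c $ (r mod d) else 0)"

definition rigidity_matrix :: "nat \<Rightarrow> nat \<Rightarrow> (nat \<times> nat) list \<Rightarrow> real vec \<Rightarrow> real mat" where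
  "rigidity_matrix d n E p = transpose_mat (Zmat d E p) * kron (incidence n E) (1\<^sub>m d)"

definition inf_rigid :: "nat \<Rightarrow> nat \<Rightarrow> (nat \<times> nat) list \<Rightarrow> real vec \<Rightarrow> bool" where
  "inf_rigid d n E p \<longleftrightarrow>
     vec_space.rank (length E) (rigidity_matrix d n E p) = d * n - d * (d + 1) div 2"

definition adj_o :: "(nat \<times> nat) set \<Rightarrow> nat \<Rightarrow> nat \<Rightarrow> bool" where
  "adj_o Eo i j \<longleftrightarrow> i \<noteq> j \<and> ((i,j) \<in> Eo \<or> (j,i) \<in> Eo)"

definition laplacian :: "nat \<Rightarrow> (nat \<times> nat) set \<Rightarrow> real mat" where
  "laplacian n Eo = mat n n (\<lambda>(i,j).
     if i = j then real (card {k. k < n \<and> adj_o Eo i k})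
     else if adj_o Eo i j then -1 else 0)"

definition psd :: "real mat \<Rightarrow> bool" where
  "psd A \<longleftrightarrow> A \<in> carrier_mat (dim_row A) (dim_row A) \<and> transpose_mat A = A \<and>
     (\<forall>x \<in> carrier_vec (dim_row A). 0 \<le> x \<bullet> (A *\<^sub>v x))"

definition vnorm :: "real vec \<Rightarrow> real" where
  "vnorm v = sqrt (v \<bullet> v)"

definition lin_indep2 :: "real vec \<Rightarrow> real vec \<Rightarrow> bool" where
  "lin_indep2 u v \<longleftrightarrow> (\<forall>a b. a \<cdot>\<^sub>v u + b \<cdot>\<^sub>v v = 0\<^sub>v (dim_vec u) \<longrightarrow> a = 0 \<and> b = 0)"

definition ones_kron_I :: "nat \<Rightarrow> nat \<Rightarrow> real mat" where
  "ones_kron_I n d = kron (mat n 1 (\<lambda>_. 1)) (1\<^sub>m d)"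

end

theory Submission
  imports Defs
begin

lemma sum_lessThan_mult_blocks:
  "(\<Sum>r<n*d. f r) = (\<Sum>i<n. \<Sum>a<d. f (i*d + a :: nat))"
proof (induction n)
  case (Suc n)
  have "(\<Sum>r<Suc n*d. f r) = (\<Sum>r<n*d. f r) + (\<Sum>r\<in>{n*d..<n*d+d}. f r)"
    by (simp add: add.commute lessThan_atLeast0 sum.atLeastLessThan_concat)
  also have "(\<Sum>r\<in>{n*d..<n*d+d}. f r) = (\<Sum>a<d. f (n*d + a))"
    by (simp add: atLeast0LessThan[symmetric] sum.shift_bounds_nat_ivl[symmetric] add.commute)
  finally show ?case using Suc by simp
qed simp

lemma block_index_less: "i < n \<Longrightarrow> a < d \<Longrightarrow> i*d + a < n*(d::nat)"
proof -
  assume "i < n" "a < d"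
  hence "i*d + a < Suc i * d" by simp
  also have "\<dots> \<le> n * d" using \<open>i < n\<close> by (intro mult_le_mono1) simp
  finally show ?thesis .
qed

lemma kron_one_mult_vec:
  fixes A :: "real mat"
  assumes A: "A \<in> carrier_mat r n" and x: "x \<in> carrier_vec (n*d)"
  shows "kron A (1\<^sub>m d) *\<^sub>v x = vec (r*d) (\<lambda>q. \<Sum>i<n. A $$ (q div d, i) * x $ (i*d + q mod d))"
proof (rule eq_vecI)
  fix q assume "q < dim_vec (vec (r*d) (\<lambda>q. \<Sum>i<n. A $$ (q div d, i) * x $ (i*d + q mod d)))"
  hence q: "q < r*d" by simp
  hence qd: "q mod d < d" by (cases d) auto
  have "(kron A (1\<^sub>m d) *\<^sub>v x) $ q = (\<Sum>c<n*d. kron A (1\<^sub>m d) $$ (q,c) * x $ c)"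
    using A x q by (simp add: kron_def scalar_prod_def row_def atLeast0LessThan)
  also have "\<dots> = (\<Sum>i<n. \<Sum>a<d. if a = q mod d then A $$ (q div d, i) * x $ (i*d + a) else 0)"
    unfolding sum_lessThan_mult_blocks using A q qd
    by (intro sum.cong refl) (auto simp: kron_def block_index_less)
  also have "\<dots> = (\<Sum>i<n. A $$ (q div d, i) * x $ (i*d + q mod d))"
    using qd by (simp add: sum.delta)
  finally show "(kron A (1\<^sub>m d) *\<^sub>v x) $ q = vec (r*d) (\<lambda>q. \<Sum>i<n. A $$ (q div d, i) * x $ (i*d + q mod d)) $ q"
    using q by simp
qed (use A in \<open>simp add: kron_def\<close>)

lemma minus_vec_eq_0_iff:
  "u \<in> carrier_vec n \<Longrightarrow> v \<in> carrier_vec n \<Longrightarrow> u - v = 0\<^sub>v n \<longleftrightarrow> u = (v :: 'a :: group_add vec)"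
  by (auto simp: vec_eq_iff)

lemma agent_pos_vec: "i < n \<Longrightarrow> agent_pos d (vec (n*d) f) i = vec d (\<lambda>a. f (i*d + a))"
  by (auto simp: agent_pos_def block_index_less)

lemma dim_agent_pos [simp]: "dim_vec (agent_pos d x i) = d"
  by (simp add: agent_pos_def)

lemma agent_pos_carrier [simp]: "agent_pos d x i \<in> carrier_vec d"
  by (simp add: carrier_vecI)

lemma agent_pos_minus:
  "x \<in> carrier_vec (n*d) \<Longrightarrow> y \<in> carrier_vec (n*d) \<Longrightarrow> i < n \<Longrightarrow>
   agent_pos d (x - y) i = agent_pos d x i - agent_pos d y i"
  by (auto simp: agent_pos_def block_index_less)

definition stack_agents :: "nat \<Rightarrow> nat \<Rightarrow> (nat \<Rightarrow> real vec) \<Rightarrow> real vec" where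
  "stack_agents n d h = vec (n*d) (\<lambda>q. h (q div d) $ (q mod d))"

lemma dim_stack_agents [simp]: "dim_vec (stack_agents n d h) = n*d"
  by (simp add: stack_agents_def)

lemma stack_agents_carrier [simp]: "stack_agents n d h \<in> carrier_vec (n*d)"
  by (simp add: carrier_vecI)

lemma stack_agents_index: "i < n \<Longrightarrow> a < d \<Longrightarrow> stack_agents n d h $ (i*d + a) = h i $ a"
  by (simp add: stack_agents_def block_index_less)

lemma agent_pos_stack_agents:
  "h i \<in> carrier_vec d \<Longrightarrow> i < n \<Longrightarrow> agent_pos d (stack_agents n d h) i = h i"
  by (auto simp: stack_agents_def agent_pos_vec)

lemma agent_pos_index: "a < d \<Longrightarrow> agent_pos d x i $ a = x $ (i*d + a)"
  by (simp add: agent_pos_def)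

definition translation :: "nat \<Rightarrow> nat \<Rightarrow> real vec \<Rightarrow> real vec" where
  "translation n d c = stack_agents n d (\<lambda>_. c)"

lemma dim_translation [simp]: "dim_vec (translation n d c) = n*d"
  by (simp add: translation_def)

lemma translation_carrier [simp]: "translation n d c \<in> carrier_vec (n*d)"
  by (simp add: carrier_vecI)

lemma agent_pos_translation: "c \<in> carrier_vec d \<Longrightarrow> i < n \<Longrightarrow> agent_pos d (translation n d c) i = c"
  by (simp add: translation_def agent_pos_stack_agents)

lemma ones_kron_I_mult_vec:
  assumes c: "c \<in> carrier_vec d"
  shows "ones_kron_I n d *\<^sub>v c = translation n d c"
proof -
  have "ones_kron_I n d *\<^sub>v c =
    vec (n*d) (\<lambda>q. \<Sum>i<1. mat n 1 (\<lambda>_. 1) $$ (q div d, i) * c $ (i*d + q mod d))"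
    unfolding ones_kron_I_def by (rule kron_one_mult_vec) (use c in auto)
  then show ?thesis
    by (auto intro!: eq_vecI simp: translation_def stack_agents_def less_mult_imp_div_less)
qed

lemma ones_kron_I_range:
  "{ones_kron_I n d *\<^sub>v c | c. c \<in> carrier_vec d} = {translation n d c | c. c \<in> carrier_vec d}"
  using ones_kron_I_mult_vec by metis

lemma translations_eq_periodic:
  "{translation n d c | c. c \<in> carrier_vec d} = {x \<in> carrier_vec (n*d). \<forall>q<n*d. x $ q = x $ (q mod d)}"
proof (intro equalityI subsetI)
  fix x assume "x \<in> {translation n d c | c. c \<in> carrier_vec d}"
  have "q mod d < n*d" if "q < n*d" for q
    using le_less_trans[OF mod_less_eq_dividend that] .
  then show "x \<in> {x \<in> carrier_vec (n*d). \<forall>q<n*d. x $ q = x $ (q mod d)}"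
    using \<open>x \<in> _\<close> by (auto simp: translation_def stack_agents_def)
next
  fix x :: "real vec" assume x: "x \<in> {x \<in> carrier_vec (n*d). \<forall>q<n*d. x $ q = x $ (q mod d)}"
  have "x = translation n d (vec d (\<lambda>a. x $ a))"
  proof (rule eq_vecI)
    fix q assume "q < dim_vec (translation n d (vec d (\<lambda>a. x $ a)))"
    then have q: "q < n*d" by (simp add: translation_def)
    then have "q mod d < d" by (cases "d = 0") auto
    then show "x $ q = translation n d (vec d (\<lambda>a. x $ a)) $ q"
      using x q by (simp add: translation_def stack_agents_def)
  qed (use x in \<open>simp add: translation_def\<close>)
  then show "x \<in> {translation n d c | c. c \<in> carrier_vec d}" by fastforce
qed

definition edges_wf :: "nat \<Rightarrow> (nat \<times> nat) list \<Rightarrow> bool" where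
  "edges_wf n E \<longleftrightarrow> (\<forall>(i,j) \<in> set E. i < n \<and> j < n \<and> i \<noteq> j)"

lemma edges_wfD:
  assumes "edges_wf n E" "k < length E"
  shows "fst (E!k) < n" "snd (E!k) < n" "fst (E!k) \<noteq> snd (E!k)"
proof -
  have "case E!k of (i,j) \<Rightarrow> i < n \<and> j < n \<and> i \<noteq> j"
    using assms(1) nth_mem[OF assms(2)] unfolding edges_wf_def by (rule bspec)
  then show "fst (E!k) < n" "snd (E!k) < n" "fst (E!k) \<noteq> snd (E!k)"
    by (simp_all add: split_beta)
qed

lemma incidence_kron_carrier: "kron (incidence n E) (1\<^sub>m d) \<in> carrier_mat (length E * d) (n*d)"
  by (simp add: kron_def incidence_def)

lemma transpose_Zmat_carrier: "transpose_mat (Zmat d E p) \<in> carrier_mat (length E) (length E * d)"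
  by (simp add: Zmat_def mult.commute[of d])

lemma rigidity_matrix_carrier: "rigidity_matrix d n E p \<in> carrier_mat (length E) (n*d)"
  unfolding rigidity_matrix_def by (rule mult_carrier_mat[OF transpose_Zmat_carrier incidence_kron_carrier])

lemma dim_edge_vec [simp]: "dim_vec (edge_vec d E x k) = d"
  by (simp add: edge_vec_def)

lemma edge_vec_carrier [simp]: "edge_vec d E x k \<in> carrier_vec d"
  by (simp add: carrier_vecI)

lemma edge_vec_nth: "a < d \<Longrightarrow> edge_vec d E x k $ a = x $ (snd (E!k)*d + a) - x $ (fst (E!k)*d + a)"
  by (simp add: edge_vec_def agent_pos_def)

lemma incidence_row_sum:
  assumes "k < length E" "fst (E!k) < n" "snd (E!k) < n" "fst (E!k) \<noteq> snd (E!k)"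
  shows "(\<Sum>i<n. incidence n E $$ (k,i) * y i) = y (snd (E!k)) - y (fst (E!k))"
proof -
  have "(\<Sum>i<n. incidence n E $$ (k,i) * y i) =
     (\<Sum>i<n. (if i = snd (E!k) then y i else 0) - (if i = fst (E!k) then y i else 0))"
    using assms by (intro sum.cong refl) (auto simp: incidence_def)
  also have "\<dots> = y (snd (E!k)) - y (fst (E!k))"
    using assms by (simp add: sum_subtractf sum.delta)
  finally show ?thesis .
qed

lemma incidence_kron_mult_vec:
  assumes E: "edges_wf n E" and x: "x \<in> carrier_vec (n*d)"
  shows "kron (incidence n E) (1\<^sub>m d) *\<^sub>v x =
    stack_agents (length E) d (edge_vec d E x)"
proof -
  have "kron (incidence n E) (1\<^sub>m d) *\<^sub>v x =
    vec (length E * d) (\<lambda>q. \<Sum>i<n. incidence n E $$ (q div d, i) * x $ (i*d + q mod d))"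
    by (rule kron_one_mult_vec[OF _ x]) (simp add: incidence_def)
  also have "\<dots> = stack_agents (length E) d (edge_vec d E x)"
  proof (rule eq_vecI)
    fix q assume "q < dim_vec (stack_agents (length E) d (edge_vec d E x))"
    then have q: "q < length E * d" by simp
    then have k: "q div d < length E" by (simp add: less_mult_imp_div_less)
    from q have a: "q mod d < d" by (cases "d = 0") auto
    show "vec (length E * d) (\<lambda>q. \<Sum>i<n. incidence n E $$ (q div d, i) * x $ (i*d + q mod d)) $ q =
        stack_agents (length E) d (edge_vec d E x) $ q"
      using q a unfolding stack_agents_def by (simp add: incidence_row_sum[OF k edges_wfD[OF E k]] edge_vec_nth)
  qed simp
  finally show ?thesis .
qed

lemma transpose_Zmat_mult_vec:
  assumes w: "w \<in> carrier_vec (length E * d)"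
  shows "transpose_mat (Zmat d E p) *\<^sub>v w =
    vec (length E) (\<lambda>k. edge_vec d E p k \<bullet> vec d (\<lambda>a. w $ (k*d + a)))"
proof (rule eq_vecI)
  fix k assume "k < dim_vec (vec (length E) (\<lambda>k. edge_vec d E p k \<bullet> vec d (\<lambda>a. w $ (k*d + a))))"
  hence k: "k < length E" by simp
  have "(transpose_mat (Zmat d E p) *\<^sub>v w) $ k = (\<Sum>r<length E * d. Zmat d E p $$ (r,k) * w $ r)"
    using k w by (simp add: scalar_prod_def Zmat_def atLeast0LessThan mult.commute)
  also have "\<dots> = (\<Sum>k'<length E. \<Sum>a<d. if k' = k then edge_vec d E p k $ a * w $ (k*d + a) else 0)"
    unfolding sum_lessThan_mult_blocks using k
    by (intro sum.cong refl) (auto simp: Zmat_def block_index_less mult.commute[of d])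
  also have "\<dots> = edge_vec d E p k \<bullet> vec d (\<lambda>a. w $ (k*d + a))"
    using k by (subst sum.swap) (simp add: sum.delta scalar_prod_def atLeast0LessThan)
  finally show "(transpose_mat (Zmat d E p) *\<^sub>v w) $ k =
      vec (length E) (\<lambda>k. edge_vec d E p k \<bullet> vec d (\<lambda>a. w $ (k*d + a))) $ k"
    using k by simp
qed (simp add: Zmat_def)

lemma rigidity_matrix_mult_vec:
  assumes E: "edges_wf n E" and x: "x \<in> carrier_vec (n*d)"
  shows "rigidity_matrix d n E p *\<^sub>v x = vec (length E) (\<lambda>k. edge_vec d E p k \<bullet> edge_vec d E x k)"
proof -
  have "rigidity_matrix d n E p *\<^sub>v x =
      transpose_mat (Zmat d E p) *\<^sub>v (kron (incidence n E) (1\<^sub>m d) *\<^sub>v x)"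
    unfolding rigidity_matrix_def
    by (rule assoc_mult_mat_vec[OF transpose_Zmat_carrier incidence_kron_carrier x])
  also have "\<dots> = vec (length E) (\<lambda>k. edge_vec d E p k \<bullet> edge_vec d E x k)"
  proof -
    have "vec d (\<lambda>a. stack_agents (length E) d (edge_vec d E x) $ (k*d + a)) = edge_vec d E x k"
      if "k < length E" for k
      using that by (intro eq_vecI) (simp_all add: stack_agents_index)
    then show ?thesis
      unfolding incidence_kron_mult_vec[OF E x] by (subst transpose_Zmat_mult_vec) auto
  qed
  finally show ?thesis .
qed

lemma rank_nullity_mat:
  fixes A :: "'a::field mat"
  assumes A: "A \<in> carrier_mat nr nc"
  shows "vec_space.rank nr A + kernel.dim nc A = nc"
proof -
  interpret V: vec_space "TYPE('a)" nc .
  interpret W: vec_space "TYPE('a)" nr .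
  interpret K: kernel nr nc A by (unfold_locales, rule A)
  interpret L: linear_map class_ring "module_vec TYPE('a) nc" "module_vec TYPE('a) nr" "\<lambda>v. A *\<^sub>v v"
    by (intro_locales, unfold mod_hom_axioms_def LinearCombinations.module_hom_def)
      (use A in \<open>auto simp: module_vec_simps Pi_def mult_add_distrib_mat_vec mult_mat_vec\<close>)
  have "vectorspace.dim class_ring (W.vs L.imT) + vectorspace.dim class_ring (V.vs L.kerT) = V.dim"
    by (rule L.rank_nullity) simp
  moreover have "L.imT = W.span (set (cols A))"
  proof -
    have "L.imT = (\<lambda>v. A *\<^sub>v v) ` carrier_vec nc"
      unfolding L.im_def by (simp add: module_vec_simps)
    also have "\<dots> = W.col_space A"
      unfolding W.col_space_eq[OF A] using A by (auto intro: mult_mat_vec_carrier)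
    finally show ?thesis unfolding W.col_space_def .
  qed
  moreover have "L.kerT = mat_kernel A"
    unfolding L.ker_def mat_kernel_def using A by (auto simp: module_vec_simps)
  ultimately show ?thesis unfolding W.rank_def V.dim_is_n by simp
qed

lemma independent_kernel_vectors_bound:
  fixes A :: "'a::field mat"
  assumes A: "A \<in> carrier_mat nr nc" and vs: "set vs \<subseteq> carrier_vec nc"
    and ker: "\<And>v. v \<in> set vs \<Longrightarrow> A *\<^sub>v v = 0\<^sub>v nr"
    and indep: "\<And>c. c \<in> carrier_vec (length vs) \<Longrightarrow> mat_of_cols nc vs *\<^sub>v c = 0\<^sub>v nc \<Longrightarrow> c = 0\<^sub>v (length vs)"
  shows "length vs + vec_space.rank nr A \<le> nc"
proof -
  interpret V: vec_space "TYPE('a)" nc .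
  interpret K: kernel nr nc A by (unfold_locales, rule A)
  define k where "k = length vs"
  define B where "B = mat_of_cols nc vs"
  have B: "B \<in> carrier_mat nc k" by (simp add: B_def k_def)
  have cols: "cols B = vs" using vs by (simp add: B_def)
  have B_unit: "B *\<^sub>v unit_vec k i = col B i" if "i < k" for i
    using B that by (intro eq_vecI) (auto simp: scalar_prod_right_unit)
  have "distinct vs"
  proof (rule ccontr)
    assume "\<not> distinct vs"
    then obtain i j where ij: "i < k" "j < k" "i \<noteq> j" "vs ! i = vs ! j"
      unfolding distinct_conv_nth k_def by blast
    moreover have "vs ! i \<in> carrier_vec nc" "vs ! j \<in> carrier_vec nc"
      using vs ij nth_mem unfolding k_def by blast+
    ultimately have "col B i = col B j" by (simp add: B_def k_def)
    let ?c = "unit_vec k i - unit_vec k j :: 'a vec"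
    have "B *\<^sub>v ?c = 0\<^sub>v nc"
      using B ij B_unit \<open>col B i = col B j\<close> by (simp add: mult_minus_distrib_mat_vec)
    then have "?c = 0\<^sub>v k" using indep[of ?c] by (simp add: k_def B_def)
    then have "?c $ i = 0" using ij by simp
    then show False using ij by simp
  qed
  then have li: "\<not> V.lin_dep (set vs)"
    using V.lin_depE[OF B[unfolded k_def]] indep cols unfolding B_def by metis
  have S: "set vs \<subseteq> mat_kernel A"
    using vs ker A by (auto intro: mat_kernelI)
  obtain Bs where "finite Bs" "K.basis Bs" using kernel_basis_exists[OF A] by auto
  then have fd: "K.Ker.fin_dim" unfolding K.Ker.fin_dim_def K.Ker.basis_def by auto
  have "\<not> K.Ker.lin_dep (set vs)" using K.lindep_same[OF S] li by simp
  then have "card (set vs) \<le> kernel.dim nc A" using K.Ker.li_le_dim(2)[OF fd S] by simp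
  then show ?thesis
    using rank_nullity_mat[OF A] distinct_card[OF \<open>distinct vs\<close>] by simp
qed

definition plane_rotation :: "nat \<Rightarrow> nat \<Rightarrow> real vec \<Rightarrow> real vec" where
  "plane_rotation f g v = vec (dim_vec v) (\<lambda>e. if e = f then v $ g else if e = g then - v $ f else 0)"

lemma dim_plane_rotation [simp]: "dim_vec (plane_rotation f g v) = dim_vec v"
  by (simp add: plane_rotation_def)

lemma plane_rotation_index:
  "e < dim_vec v \<Longrightarrow> plane_rotation f g v $ e = (if e = f then v $ g else if e = g then - v $ f else 0)"
  by (simp add: plane_rotation_def)

lemma plane_rotation_carrier [simp]: "v \<in> carrier_vec d \<Longrightarrow> plane_rotation f g v \<in> carrier_vec d"
  by (intro carrier_vecI) (simp add: carrier_vecD)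

lemma plane_rotation_minus:
  "u \<in> carrier_vec d \<Longrightarrow> v \<in> carrier_vec d \<Longrightarrow> f < d \<Longrightarrow> g < d \<Longrightarrow>
   plane_rotation f g (u - v) = plane_rotation f g u - plane_rotation f g v"
  by (auto simp: plane_rotation_def)

lemma scalar_prod_plane_rotation:
  assumes v: "v \<in> carrier_vec d" and fg: "f < d" "g < d" "f \<noteq> g"
  shows "v \<bullet> plane_rotation f g v = 0"
proof -
  have "v \<bullet> plane_rotation f g v =
      (\<Sum>e<d. (if e = f then v $ f * v $ g else 0) - (if e = g then v $ g * v $ f else 0))"
    using v fg unfolding plane_rotation_def scalar_prod_def atLeast0LessThan
    by (intro sum.cong) auto
  also have "\<dots> = 0" using fg by (simp add: sum_subtractf sum.delta)
  finally show ?thesis .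
qed

definition rotation :: "nat \<Rightarrow> nat \<Rightarrow> nat \<Rightarrow> nat \<Rightarrow> real vec \<Rightarrow> real vec" where
  "rotation n d f g p = stack_agents n d (\<lambda>i. plane_rotation f g (agent_pos d p i))"

lemma edge_vec_stack_agents:
  assumes E: "edges_wf n E" "k < length E" and h: "\<And>i. i < n \<Longrightarrow> h i \<in> carrier_vec d"
  shows "edge_vec d E (stack_agents n d h) k = h (snd (E!k)) - h (fst (E!k))"
  using edges_wfD[OF E] h unfolding edge_vec_def by (simp add: agent_pos_stack_agents)

lemma rigidity_matrix_mult_stack_agents:
  assumes E: "edges_wf n E" and h: "\<And>i. i < n \<Longrightarrow> h i \<in> carrier_vec d"
  shows "rigidity_matrix d n E p *\<^sub>v stack_agents n d h =
    vec (length E) (\<lambda>k. edge_vec d E p k \<bullet> (h (snd (E!k)) - h (fst (E!k))))"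
  unfolding rigidity_matrix_mult_vec[OF E stack_agents_carrier]
  by (intro eq_vecI) (simp_all add: edge_vec_stack_agents[OF E _ h])

lemma rigidity_matrix_mult_translation:
  assumes "edges_wf n E" "c \<in> carrier_vec d"
  shows "rigidity_matrix d n E p *\<^sub>v translation n d c = 0\<^sub>v (length E)"
  unfolding translation_def rigidity_matrix_mult_stack_agents[OF assms(1) assms(2)]
  using assms(2) by (intro eq_vecI) auto

lemma rigidity_matrix_mult_rotation:
  assumes E: "edges_wf n E" and fg: "f < d" "g < d" "f \<noteq> g"
  shows "rigidity_matrix d n E p *\<^sub>v rotation n d f g p = 0\<^sub>v (length E)"
proof (rule eq_vecI)
  fix k assume "k < dim_vec (0\<^sub>v (length E) :: real vec)"
  then have k: "k < length E" by simp
  have "edge_vec d E p k \<bullet> (plane_rotation f g (agent_pos d p (snd (E!k))) -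
      plane_rotation f g (agent_pos d p (fst (E!k)))) =
      edge_vec d E p k \<bullet> plane_rotation f g (edge_vec d E p k)"
    unfolding edge_vec_def plane_rotation_minus[OF agent_pos_carrier agent_pos_carrier fg(1,2)] ..
  also have "\<dots> = 0" by (rule scalar_prod_plane_rotation[OF edge_vec_carrier fg])
  finally show "(rigidity_matrix d n E p *\<^sub>v rotation n d f g p) $ k = 0\<^sub>v (length E) $ k"
    unfolding rotation_def
    using k by (subst rigidity_matrix_mult_stack_agents[OF E]) simp_all
qed (simp add: rigidity_matrix_carrier[THEN carrier_matD(1)])

lemma agent_pos_rotation:
  "i < n \<Longrightarrow> agent_pos d (rotation n d f g p) i = plane_rotation f g (agent_pos d p i)"
  unfolding rotation_def by (rule agent_pos_stack_agents) simp_all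

lemma rotation_carrier [simp]: "rotation n d f g p \<in> carrier_vec (n*d)"
  by (simp add: rotation_def)

lemma mat_of_cols_mult_vec_agent:
  assumes vs: "set vs \<subseteq> carrier_vec (n*d)" and c: "c \<in> carrier_vec (length vs)"
    and i: "i < n" and e: "e < d"
  shows "(mat_of_cols (n*d) vs *\<^sub>v c) $ (i*d + e) = (\<Sum>j<length vs. agent_pos d (vs!j) i $ e * c $ j)"
  using block_index_less[OF i e] c
  by (simp add: mat_of_cols_def scalar_prod_def atLeast0LessThan agent_pos_index[OF e])

lemma planar_pinned_motion_zero:
  assumes E: "edges_wf n E" and rigid: "inf_rigid 2 n E p"
    and y: "y \<in> carrier_vec (n*2)" and Ry: "rigidity_matrix 2 n E p *\<^sub>v y = 0\<^sub>v (length E)"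
    and ab: "a < n" "b < n" "agent_pos 2 p a \<noteq> agent_pos 2 p b"
    and ya: "agent_pos 2 y a = 0\<^sub>v 2" and yb: "agent_pos 2 y b = 0\<^sub>v 2"
  shows "y = 0\<^sub>v (n*2)"
proof (rule ccontr)
  assume "y \<noteq> 0\<^sub>v (n*2)"
  then obtain q where q: "q < n*2" "y $ q \<noteq> 0" using y by (auto simp: vec_eq_iff)
  define vs where "vs = [translation n 2 (unit_vec 2 0), translation n 2 (unit_vec 2 1), rotation n 2 0 1 p, y]"
  have vs: "set vs \<subseteq> carrier_vec (n*2)" using y by (auto simp: vs_def)
  have len: "length vs = 4" by (simp add: vs_def)
  have sum4: "(\<Sum>j<4. f j) = f 0 + f 1 + f 2 + f (3::nat)" for f :: "nat \<Rightarrow> real"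
    by (simp add: eval_nat_numeral)
  have nth: "vs ! 0 = translation n 2 (unit_vec 2 0)" "vs ! 1 = translation n 2 (unit_vec 2 1)"
    "vs ! 2 = rotation n 2 0 1 p" "vs ! 3 = y"
    by (simp_all add: vs_def)
  have indep: "c = 0\<^sub>v (length vs)"
    if c: "c \<in> carrier_vec (length vs)" and comb: "mat_of_cols (n*2) vs *\<^sub>v c = 0\<^sub>v (n*2)" for c
  proof -
    have at_agent: "unit_vec 2 0 $ e * c $ 0 + unit_vec 2 1 $ e * c $ 1
        + plane_rotation 0 1 (agent_pos 2 p i) $ e * c $ 2 + agent_pos 2 y i $ e * c $ 3 = 0"
      if "i < n" "e < 2" for i e
      using arg_cong[OF comb, of "\<lambda>v. v $ (i*2 + e)"] block_index_less[OF that]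
      unfolding mat_of_cols_mult_vec_agent[OF vs c that] len sum4 nth
      by (simp add: agent_pos_translation agent_pos_rotation that)
    have eq: "c $ 0 + agent_pos 2 p i $ 1 * c $ 2 = 0" "c $ 1 - agent_pos 2 p i $ 0 * c $ 2 = 0"
      if "i < n" "agent_pos 2 y i = 0\<^sub>v 2" for i
      using at_agent[OF that(1), of 0] at_agent[OF that(1), of 1] that(2)
      by (simp_all add: plane_rotation_index)
    obtain e where e: "e < 2" "agent_pos 2 p a $ e \<noteq> agent_pos 2 p b $ e"
      using ab(3) by (metis agent_pos_carrier carrier_vecD eq_vecI)
    have "(agent_pos 2 p a $ 0 - agent_pos 2 p b $ 0) * c $ 2 = 0"
      "(agent_pos 2 p a $ 1 - agent_pos 2 p b $ 1) * c $ 2 = 0"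
      unfolding left_diff_distrib using eq[OF ab(1) ya] eq[OF ab(2) yb] by linarith+
    then have c2: "c $ 2 = 0" using e by (auto simp: less_2_cases_iff)
    then have c01: "c $ 0 = 0" "c $ 1 = 0" using eq[OF ab(1) ya] by simp_all
    have "y $ q * c $ 3 = 0"
      using arg_cong[OF comb, of "\<lambda>v. v $ q"] q c c2 c01
      by (simp add: vs_def mat_of_cols_def scalar_prod_def eval_nat_numeral atLeast0LessThan)
    then have "c $ 3 = 0" using q by simp
    then show ?thesis using c c2 c01 by (auto simp: vs_def vec_eq_iff less_Suc_eq numeral_eq_Suc)
  qed
  have "length vs + vec_space.rank (length E) (rigidity_matrix 2 n E p) \<le> n*2"
    by (rule independent_kernel_vectors_bound[OF rigidity_matrix_carrier vs _ indep])
      (use Ry E in \<open>auto simp: vs_def rigidity_matrix_mult_translation rigidity_matrix_mult_rotation\<close>)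
  moreover have "2 \<le> n" using ab by (cases "a = b") auto
  ultimately show False using rigid by (simp add: inf_rigid_def vs_def)
qed

lemma cross_eq_zero_parallel:
  fixes w0 w1 w2 v0 v1 v2 :: real
  assumes "w1*v2 - w2*v1 = 0" "w2*v0 - w0*v2 = 0" "w0*v1 - w1*v0 = 0"
  shows "(w0*w0 + w1*w1 + w2*w2) * v0 = (w0*v0 + w1*v1 + w2*v2) * w0"
    "(w0*w0 + w1*w1 + w2*w2) * v1 = (w0*v0 + w1*v1 + w2*v2) * w1"
    "(w0*w0 + w1*w1 + w2*w2) * v2 = (w0*v0 + w1*v1 + w2*v2) * w2"
proof -
  have "(w0*w0 + w1*w1 + w2*w2)*v0 - (w0*v0 + w1*v1 + w2*v2)*w0 = w2*(w2*v0 - w0*v2) - w1*(w0*v1 - w1*v0)"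
    "(w0*w0 + w1*w1 + w2*w2)*v1 - (w0*v0 + w1*v1 + w2*v2)*w1 = w0*(w0*v1 - w1*v0) - w2*(w1*v2 - w2*v1)"
    "(w0*w0 + w1*w1 + w2*w2)*v2 - (w0*v0 + w1*v1 + w2*v2)*w2 = w1*(w1*v2 - w2*v1) - w0*(w2*v0 - w0*v2)"
    by (simp_all add: algebra_simps)
  then show "(w0*w0 + w1*w1 + w2*w2) * v0 = (w0*v0 + w1*v1 + w2*v2) * w0"
    "(w0*w0 + w1*w1 + w2*w2) * v1 = (w0*v0 + w1*v1 + w2*v2) * w1"
    "(w0*w0 + w1*w1 + w2*w2) * v2 = (w0*v0 + w1*v1 + w2*v2) * w2"
    unfolding assms mult_zero_right diff_self by simp_all
qed

lemma cross_eq_zero_independent: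
  fixes w0 w1 w2 v0 v1 v2 u0 u1 u2 :: real
  assumes v: "w1*v2 - w2*v1 = 0" "w2*v0 - w0*v2 = 0" "w0*v1 - w1*v0 = 0"
    and u: "w1*u2 - w2*u1 = 0" "w2*u0 - w0*u2 = 0" "w0*u1 - w1*u0 = 0"
    and indep: "\<And>\<alpha> \<beta>. \<alpha>*v0 + \<beta>*u0 = 0 \<Longrightarrow> \<alpha>*v1 + \<beta>*u1 = 0 \<Longrightarrow> \<alpha>*v2 + \<beta>*u2 = 0 \<Longrightarrow> \<alpha> = 0 \<and> \<beta> = 0"
  shows "w0 = 0 \<and> w1 = 0 \<and> w2 = 0"
proof -
  define W where "W = w0*w0 + w1*w1 + w2*w2"
  define s where "s = w0*v0 + w1*v1 + w2*v2"
  define t where "t = w0*u0 + w1*u1 + w2*u2"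
  note lv = cross_eq_zero_parallel[OF v, folded W_def s_def]
  note lu = cross_eq_zero_parallel[OF u, folded W_def t_def]
  have comb: "(t*W)*x + (-(s*W))*y = t*(W*x) - s*(W*y)" for x y
    by (simp only: mult.assoc mult_minus_left diff_conv_add_uminus)
  have "(t*W)*v0 + (-(s*W))*u0 = 0" "(t*W)*v1 + (-(s*W))*u1 = 0" "(t*W)*v2 + (-(s*W))*u2 = 0"
    unfolding comb lv lu by (simp_all only: mult.left_commute[of t s] diff_self)
  from indep[OF this] have sW: "s*W = 0" by simp
  have "W = 0"
  proof (rule ccontr)
    assume W: "W \<noteq> 0"
    then have "v0 = 0" "v1 = 0" "v2 = 0" using sW lv by auto
    then have "1*v0 + 0*u0 = 0" "1*v1 + 0*u1 = 0" "1*v2 + 0*u2 = 0" by simp_all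
    from indep[OF this] show False by simp
  qed
  moreover have "0 \<le> w0*w0" "0 \<le> w1*w1" "0 \<le> w2*w2" by simp_all
  ultimately have "w0*w0 = 0" "w1*w1 = 0" "w2*w2 = 0" unfolding W_def by linarith+
  then show ?thesis by simp
qed
lemma spatial_pinned_motion_zero:
  assumes E: "edges_wf n E" and rigid: "inf_rigid 3 n E p"
    and y: "y \<in> carrier_vec (n*3)" and Ry: "rigidity_matrix 3 n E p *\<^sub>v y = 0\<^sub>v (length E)"
    and ab: "a < n" "b < n" "a' < n" "b' < n"
    and indep: "lin_indep2 (agent_pos 3 p b - agent_pos 3 p a) (agent_pos 3 p b' - agent_pos 3 p a')"
    and y0: "agent_pos 3 y a = 0\<^sub>v 3" "agent_pos 3 y b = 0\<^sub>v 3"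
      "agent_pos 3 y a' = 0\<^sub>v 3" "agent_pos 3 y b' = 0\<^sub>v 3"
  shows "y = 0\<^sub>v (n*3)"
proof (rule ccontr)
  assume "y \<noteq> 0\<^sub>v (n*3)"
  then obtain q where q: "q < n*3" "y $ q \<noteq> 0" using y by (auto simp: vec_eq_iff)
  define vs where "vs = [translation n 3 (unit_vec 3 0), translation n 3 (unit_vec 3 1),
    translation n 3 (unit_vec 3 2), rotation n 3 1 2 p, rotation n 3 2 0 p, rotation n 3 0 1 p, y]"
  define P where "P = (\<lambda>i e. agent_pos 3 p i $ e)"
  have vs: "set vs \<subseteq> carrier_vec (n*3)" using y by (auto simp: vs_def)
  have len: "length vs = 7" by (simp add: vs_def)
  have sum7: "(\<Sum>j<7. f j) = f 0 + f 1 + f 2 + f 3 + f 4 + f 5 + f (6::nat)" for f :: "nat \<Rightarrow> real"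
    by (simp add: eval_nat_numeral)
  have nth: "vs ! 0 = translation n 3 (unit_vec 3 0)" "vs ! 1 = translation n 3 (unit_vec 3 1)"
    "vs ! 2 = translation n 3 (unit_vec 3 2)" "vs ! 3 = rotation n 3 1 2 p"
    "vs ! 4 = rotation n 3 2 0 p" "vs ! 5 = rotation n 3 0 1 p" "vs ! 6 = y"
    by (simp_all add: vs_def)
  have indep_coords: "\<alpha> = 0 \<and> \<beta> = 0"
    if "\<And>e. e < 3 \<Longrightarrow> \<alpha> * (P b e - P a e) + \<beta> * (P b' e - P a' e) = 0" for \<alpha> \<beta>
  proof -
    have "\<alpha> \<cdot>\<^sub>v (agent_pos 3 p b - agent_pos 3 p a) + \<beta> \<cdot>\<^sub>v (agent_pos 3 p b' - agent_pos 3 p a')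
        = 0\<^sub>v (dim_vec (agent_pos 3 p b - agent_pos 3 p a))"
      using that by (intro eq_vecI) (simp_all add: P_def)
    then show ?thesis using indep unfolding lin_indep2_def by blast
  qed
  have indep_vecs: "c = 0\<^sub>v (length vs)"
    if c: "c \<in> carrier_vec (length vs)" and comb: "mat_of_cols (n*3) vs *\<^sub>v c = 0\<^sub>v (n*3)" for c
  proof -
    have at_agent: "unit_vec 3 0 $ e * c $ 0 + unit_vec 3 1 $ e * c $ 1 + unit_vec 3 2 $ e * c $ 2
        + plane_rotation 1 2 (agent_pos 3 p i) $ e * c $ 3 + plane_rotation 2 0 (agent_pos 3 p i) $ e * c $ 4
        + plane_rotation 0 1 (agent_pos 3 p i) $ e * c $ 5 + agent_pos 3 y i $ e * c $ 6 = 0"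
      if "i < n" "e < 3" for i e
      using arg_cong[OF comb, of "\<lambda>v. v $ (i*3 + e)"] block_index_less[OF that]
      unfolding mat_of_cols_mult_vec_agent[OF vs c that] len sum7 nth
      by (simp add: agent_pos_translation agent_pos_rotation that)
    have eq: "c $ 0 - c $ 4 * P i 2 + c $ 5 * P i 1 = 0" "c $ 1 + c $ 3 * P i 2 - c $ 5 * P i 0 = 0"
      "c $ 2 - c $ 3 * P i 1 + c $ 4 * P i 0 = 0"
      if "i < n" "agent_pos 3 y i = 0\<^sub>v 3" for i
      using at_agent[OF that(1), of 0] at_agent[OF that(1), of 1] at_agent[OF that(1), of 2] that(2)
      by (simp_all add: plane_rotation_index P_def algebra_simps)
    have cross: "c $ 4 * (P j 2 - P i 2) - c $ 5 * (P j 1 - P i 1) = 0"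
      "c $ 5 * (P j 0 - P i 0) - c $ 3 * (P j 2 - P i 2) = 0"
      "c $ 3 * (P j 1 - P i 1) - c $ 4 * (P j 0 - P i 0) = 0"
      if "i < n" "agent_pos 3 y i = 0\<^sub>v 3" "j < n" "agent_pos 3 y j = 0\<^sub>v 3" for i j
      unfolding right_diff_distrib using eq[OF that(1,2)] eq[OF that(3,4)] by linarith+
    have c345: "c $ 3 = 0 \<and> c $ 4 = 0 \<and> c $ 5 = 0"
      by (rule cross_eq_zero_independent[OF cross[OF ab(1) y0(1) ab(2) y0(2)]
            cross[OF ab(3) y0(3) ab(4) y0(4)] indep_coords])
        (auto simp: less_Suc_eq numeral_eq_Suc)
    then have c012: "c $ 0 = 0" "c $ 1 = 0" "c $ 2 = 0" using eq[OF ab(1) y0(1)] by simp_all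
    have "y $ q * c $ 6 = 0"
      using arg_cong[OF comb, of "\<lambda>v. v $ q"] q c c012 c345
      by (simp add: vs_def mat_of_cols_def scalar_prod_def eval_nat_numeral atLeast0LessThan)
    then have "c $ 6 = 0" using q by simp
    then show ?thesis using c c012 c345 by (auto simp: len vec_eq_iff less_Suc_eq numeral_eq_Suc)
  qed
  have "length vs + vec_space.rank (length E) (rigidity_matrix 3 n E p) \<le> n*3"
    by (rule independent_kernel_vectors_bound[OF rigidity_matrix_carrier vs _ indep_vecs])
      (use Ry E in \<open>auto simp: vs_def rigidity_matrix_mult_translation rigidity_matrix_mult_rotation\<close>)
  moreover have "a \<noteq> b"
  proof
    assume "a = b"
    then have "1 * (P b e - P a e) + 0 * (P b' e - P a' e) = 0" for e by simp
    from indep_coords[OF this] show False by simp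
  qed
  then have "2 \<le> n" using ab by linarith
  ultimately show False using rigid by (simp add: inf_rigid_def len)
qed

lemma laplacian_carrier: "laplacian n Eo \<in> carrier_mat n n"
  by (simp add: laplacian_def)

lemma transpose_laplacian: "transpose_mat (laplacian n Eo) = laplacian n Eo"
  by (rule eq_matI) (auto simp: laplacian_def adj_o_def)

lemma laplacian_row_mult:
  assumes i: "i < n"
  shows "(\<Sum>j<n. laplacian n Eo $$ (i,j) * y j) = (\<Sum>j<n. if adj_o Eo i j then y i - y j else 0)"
proof -
  have deg: "real (card {k. k < n \<and> adj_o Eo i k}) = (\<Sum>j<n. if adj_o Eo i j then 1 else 0)"
    by (simp add: sum.If_cases Int_def conj_commute)
  have "(\<Sum>j<n. laplacian n Eo $$ (i,j) * y j) =
      (\<Sum>j<n. (if j = i then real (card {k. k < n \<and> adj_o Eo i k}) * y i else 0)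
        - (if adj_o Eo i j then y j else 0))"
    using i by (intro sum.cong refl) (auto simp: laplacian_def adj_o_def)
  also have "\<dots> = (\<Sum>j<n. if adj_o Eo i j then 1 else 0) * y i - (\<Sum>j<n. if adj_o Eo i j then y j else 0)"
    using i unfolding deg by (simp add: sum_subtractf sum.delta)
  also have "\<dots> = (\<Sum>j<n. if adj_o Eo i j then y i - y j else 0)"
    by (simp add: sum_distrib_right sum_subtractf[symmetric] if_distrib cong: if_cong)
  finally show ?thesis .
qed

lemma laplacian_quadratic_form:
  "(\<Sum>i<n. y i * (\<Sum>j<n. laplacian n Eo $$ (i,j) * y j)) =
   (\<Sum>i<n. \<Sum>j<n. if adj_o Eo i j then (y i - y j)^2 else 0) / 2"
proof -
  let ?S = "\<lambda>i j. if adj_o Eo i j then y i * y i - y i * y j else 0"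
  have "(\<Sum>i<n. y i * (\<Sum>j<n. laplacian n Eo $$ (i,j) * y j)) = (\<Sum>i<n. \<Sum>j<n. ?S i j)"
    by (intro sum.cong refl)
      (simp add: laplacian_row_mult sum_distrib_left if_distrib right_diff_distrib cong: if_cong)
  moreover have "(\<Sum>i<n. \<Sum>j<n. ?S i j) = (\<Sum>i<n. \<Sum>j<n. ?S j i)" by (rule sum.swap)
  moreover have "(if adj_o Eo i j then (y i - y j)^2 else 0) = ?S i j + ?S j i" for i j
    by (auto simp: adj_o_def power2_eq_square algebra_simps)
  ultimately show ?thesis by (simp add: sum.distrib)
qed

lemma laplacian_quadratic_form_nonneg: "0 \<le> (\<Sum>i<n. y i * (\<Sum>j<n. laplacian n Eo $$ (i,j) * y j))"
  unfolding laplacian_quadratic_form by (intro divide_nonneg_pos sum_nonneg) auto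

lemma laplacian_quadratic_form_eq_0:
  assumes "(\<Sum>i<n. y i * (\<Sum>j<n. laplacian n Eo $$ (i,j) * y j)) = 0"
    and "i < n" "j < n" "adj_o Eo i j"
  shows "y i = y j"
proof -
  let ?f = "\<lambda>i j. if adj_o Eo i j then (y i - y j)^2 else 0"
  have "(\<Sum>i<n. \<Sum>j<n. ?f i j) = 0" using assms(1) unfolding laplacian_quadratic_form by simp
  then have "\<forall>i<n. \<forall>j<n. ?f i j = 0"
    by (simp add: sum_nonneg sum_nonneg_eq_0_iff)
  then have "(y i - y j)^2 = 0" using assms(2-4) by presburger
  then show ?thesis by simp
qed

lemma transpose_kron_one: "transpose_mat (kron A (1\<^sub>m d)) = kron (transpose_mat A) (1\<^sub>m d)"
proof (rule eq_matI)
  fix i j assume "i < dim_row (kron (transpose_mat A) (1\<^sub>m d))" "j < dim_col (kron (transpose_mat A) (1\<^sub>m d))"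
  then have "i mod d < d" "j mod d < d" "i div d < dim_col A" "j div d < dim_row A"
    by (auto simp: kron_def less_mult_imp_div_less) (cases "d = 0"; simp)+
  then show "transpose_mat (kron A (1\<^sub>m d)) $$ (i, j) = kron (transpose_mat A) (1\<^sub>m d) $$ (i, j)"
    using \<open>i < _\<close> \<open>j < _\<close> by (auto simp: kron_def)
qed (simp_all add: kron_def)

lemma kron_laplacian_quadratic_form:
  assumes x: "x \<in> carrier_vec (n*d)"
  shows "x \<bullet> (kron (laplacian n Eo) (1\<^sub>m d) *\<^sub>v x) =
    (\<Sum>a<d. \<Sum>i<n. x $ (i*d + a) * (\<Sum>j<n. laplacian n Eo $$ (i,j) * x $ (j*d + a)))"
proof -
  have "x \<bullet> (kron (laplacian n Eo) (1\<^sub>m d) *\<^sub>v x) =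
     (\<Sum>q<n*d. x $ q * (\<Sum>j<n. laplacian n Eo $$ (q div d, j) * x $ (j*d + q mod d)))"
    unfolding kron_one_mult_vec[OF laplacian_carrier x] using x
    by (simp add: scalar_prod_def atLeast0LessThan)
  also have "\<dots> = (\<Sum>i<n. \<Sum>a<d. x $ (i*d + a) * (\<Sum>j<n. laplacian n Eo $$ (i,j) * x $ (j*d + a)))"
    unfolding sum_lessThan_mult_blocks by simp
  also have "\<dots> = (\<Sum>a<d. \<Sum>i<n. x $ (i*d + a) * (\<Sum>j<n. laplacian n Eo $$ (i,j) * x $ (j*d + a)))"
    by (rule sum.swap)
  finally show ?thesis .
qed

lemma kron_laplacian_mult_translation:
  assumes c: "c \<in> carrier_vec d"
  shows "kron (laplacian n Eo) (1\<^sub>m d) *\<^sub>v translation n d c = 0\<^sub>v (n*d)"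
  unfolding kron_one_mult_vec[OF laplacian_carrier translation_carrier]
proof (rule eq_vecI)
  fix q assume "q < dim_vec (0\<^sub>v (n*d) :: real vec)"
  then have q: "q < n*d" "q div d < n" "q mod d < d"
    by (auto simp: less_mult_imp_div_less) (cases "d = 0"; simp)
  have "(\<Sum>i<n. laplacian n Eo $$ (q div d, i) * translation n d c $ (i*d + q mod d))
      = (\<Sum>i<n. laplacian n Eo $$ (q div d, i) * c $ (q mod d))"
    using q by (intro sum.cong refl) (simp add: translation_def stack_agents_index)
  also have "\<dots> = 0" by (simp add: laplacian_row_mult[OF q(2)])
  finally show "vec (n*d) (\<lambda>q. \<Sum>i<n. laplacian n Eo $$ (q div d, i) * translation n d c $ (i*d + q mod d)) $ q
      = 0\<^sub>v (n*d) $ q" using q by simp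
qed simp

lemma char_poly_zero_mat: "char_poly (0\<^sub>m d d :: 'a::field mat) = monom 1 d"
proof -
  have "char_poly (0\<^sub>m d d :: 'a mat) = (\<Prod>a\<leftarrow>diag_mat (0\<^sub>m d d :: 'a mat). [:- a, 1:])"
    by (rule char_poly_upper_triangular[of _ d]) (auto simp: upper_triangular_def)
  also have "diag_mat (0\<^sub>m d d :: 'a mat) = replicate d 0"
    by (rule nth_equalityI) (auto simp: diag_mat_def)
  also have "(\<Prod>a\<leftarrow>replicate d (0::'a). [:- a, 1:]) = monom 1 d"
    by (simp add: prod_list_replicate x_as_monom monom_power)
  finally show ?thesis .
qed

lemma char_poly_zero_left_cols:
  fixes B :: "'a::field mat"
  assumes B: "B \<in> carrier_mat (d+k) (d+k)" and z: "\<And>i j. i < d+k \<Longrightarrow> j < d \<Longrightarrow> B $$ (i,j) = 0"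
  shows "char_poly B = monom 1 d * char_poly (mat k k (\<lambda>(i,j). B $$ (d+i, d+j)))"
proof -
  define G where "G = mat k k (\<lambda>(i,j). B $$ (d+i, d+j))"
  define B2 where "B2 = mat d k (\<lambda>(i,j). B $$ (i, d+j))"
  have G: "G \<in> carrier_mat k k" and B2: "B2 \<in> carrier_mat d k" by (auto simp: G_def B2_def)
  have BB: "B = four_block_mat (0\<^sub>m d d) B2 (0\<^sub>m k d) G"
    by (rule eq_matI) (use B z in \<open>auto simp: G_def B2_def four_block_mat_def\<close>)
  let ?cm = "\<lambda>A. [:0, 1:] \<cdot>\<^sub>m 1\<^sub>m (dim_row A) + map_mat (\<lambda>a. [:- a:]) A"
  have "char_poly B = det (?cm (four_block_mat (0\<^sub>m d d) B2 (0\<^sub>m k d) G))"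
    unfolding char_poly_defs BB ..
  also have "?cm (four_block_mat (0\<^sub>m d d) B2 (0\<^sub>m k d) G) =
     four_block_mat (?cm (0\<^sub>m d d)) (map_mat (\<lambda>a. [:- a:]) B2) (0\<^sub>m k d) (?cm G)"
    by (rule eq_matI) (use G B2 in \<open>auto simp: one_poly_def\<close>)
  also have "det \<dots> = det (?cm (0\<^sub>m d d)) * det (?cm G)"
    by (rule det_four_block_mat_lower_left_zero[OF _ _ refl]) (use G B2 in auto)
  also have "\<dots> = char_poly (0\<^sub>m d d) * char_poly G" unfolding char_poly_defs ..
  finally show ?thesis unfolding char_poly_zero_mat G_def .
qed

lemma scalar_prod_self_eq_0:
  fixes u :: "real vec"
  assumes u: "u \<in> carrier_vec N" and z: "u \<bullet> u = 0"
  shows "u = 0\<^sub>v N"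
proof (rule eq_vecI)
  have "(\<Sum>i\<in>{0..<N}. u $ i * u $ i) = 0" using z u by (simp add: scalar_prod_def)
  then have "\<forall>i\<in>{0..<N}. u $ i * u $ i = 0" by (subst (asm) sum_nonneg_eq_0_iff) auto
  then show "\<And>i. i < dim_vec (0\<^sub>v N) \<Longrightarrow> u $ i = 0\<^sub>v N $ i" by auto
qed (use u in auto)

lemma symmetric_mat_kernel_square:
  fixes F :: "real mat"
  assumes F: "F \<in> carrier_mat N N" and sym: "transpose_mat F = F"
    and w: "w \<in> carrier_vec N" and FFw: "F *\<^sub>v (F *\<^sub>v w) = 0\<^sub>v N"
  shows "F *\<^sub>v w = 0\<^sub>v N"
proof (rule scalar_prod_self_eq_0)
  show Fw: "F *\<^sub>v w \<in> carrier_vec N" using F w by simp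
  have "(F *\<^sub>v w) \<bullet> (F *\<^sub>v w) = (transpose_mat F *\<^sub>v (F *\<^sub>v w)) \<bullet> w"
    using transpose_vec_mult_scalar[OF F w Fw] by simp
  then show "(F *\<^sub>v w) \<bullet> (F *\<^sub>v w) = 0" unfolding sym FFw using w by simp
qed

lemma order_zero_char_poly_symmetric:
  fixes F :: "real mat"
  assumes F: "F \<in> carrier_mat N N" and sym: "transpose_mat F = F"
    and P: "P \<in> carrier_mat N N" and Q: "Q \<in> carrier_mat N N"
    and PQ: "P * Q = 1\<^sub>m N" and QP: "Q * P = 1\<^sub>m N" and dN: "d \<le> N"
    and ker: "\<And>x. x \<in> carrier_vec N \<Longrightarrow> F *\<^sub>v x = 0\<^sub>v N \<longleftrightarrow> (\<forall>i\<in>{d..<N}. (Q *\<^sub>v x) $ i = 0)"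
  shows "Polynomial.order 0 (char_poly F) = d"
proof -
  define k where "k = N - d"
  have Nk: "N = d + k" using dN by (simp add: k_def)
  define B where "B = Q * (F * P)"
  have FP: "F * P \<in> carrier_mat N N" using F P by simp
  have B: "B \<in> carrier_mat (d+k) (d+k)" unfolding B_def Nk[symmetric] using Q FP by simp
  have B_mult: "B *\<^sub>v y = Q *\<^sub>v (F *\<^sub>v (P *\<^sub>v y))" if "y \<in> carrier_vec N" for y
    unfolding B_def assoc_mult_mat_vec[OF Q FP that] assoc_mult_mat_vec[OF F P that] ..
  have "similar_mat F B"
  proof -
    have "P * B * Q = (P * Q) * F * (P * Q)"
      unfolding B_def using P Q F by (simp add: assoc_mult_mat[of _ N N _ N _ N])
    then have "F = P * B * Q" unfolding PQ using F by simp
    then show ?thesis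
      unfolding similar_mat_def using similar_mat_witI[OF PQ QP _ F _ P Q] B Nk by auto
  qed
  define G where "G = mat k k (\<lambda>(i,j). B $$ (d+i, d+j))"
  have G: "G \<in> carrier_mat k k" by (simp add: G_def)
  have "B $$ (i,j) = 0" if "i < d+k" "j < d" for i j
  proof -
    have "Q *\<^sub>v col P j = unit_vec N j"
      using P Q that Nk by (simp add: col_mult2[symmetric] QP)
    then have "F *\<^sub>v col P j = 0\<^sub>v N" using ker[of "col P j"] P that by auto
    then have "col (F * P) j = 0\<^sub>v N" using col_mult2[OF F P] that Nk by simp
    moreover have "B $$ (i,j) = row Q i \<bullet> col (F * P) j"
      unfolding B_def using Q FP that Nk by (intro index_mult_mat(1)) auto
    moreover have "row Q i \<in> carrier_vec N" using Q by (simp add: row_def carrier_vecI)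
    ultimately show ?thesis by simp
  qed
  then have char_poly_F: "char_poly F = monom 1 d * char_poly G"
    unfolding char_poly_similar[OF \<open>similar_mat F B\<close>] G_def by (rule char_poly_zero_left_cols[OF B])
  have "poly (char_poly G) 0 \<noteq> 0"
  proof
    assume "poly (char_poly G) 0 = 0"
    then obtain v where v: "v \<in> carrier_vec k" "v \<noteq> 0\<^sub>v k" "G *\<^sub>v v = 0 \<cdot>\<^sub>v v"
      using eigenvalue_root_char_poly[OF G, of 0] G unfolding eigenvalue_def eigenvector_def by auto
    moreover have "0 \<cdot>\<^sub>v v = 0\<^sub>v k" using v(1) by (intro eq_vecI) auto
    ultimately have Gv: "G *\<^sub>v v = 0\<^sub>v k" by simp
    define y where "y = vec N (\<lambda>q. if q < d then 0 else v $ (q - d))"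
    have y: "y \<in> carrier_vec N" by (simp add: y_def)
    define w where "w = P *\<^sub>v y"
    have w: "w \<in> carrier_vec N" using P y by (simp add: w_def)
    have split: "(\<Sum>j<d+k. f j) = (\<Sum>j<d. f j) + (\<Sum>j<k. f (d+j))" for f :: "nat \<Rightarrow> real"
      by (induct k) (simp_all add: add_Suc_right)
    have "(B *\<^sub>v y) $ (d+i) = (G *\<^sub>v v) $ i" if "i < k" for i
    proof -
      have "(B *\<^sub>v y) $ (d+i) = (\<Sum>j<d+k. B $$ (d+i, j) * y $ j)"
        using B y that Nk by (simp add: scalar_prod_def atLeast0LessThan)
      also have "\<dots> = (\<Sum>j<k. B $$ (d+i, d+j) * v $ j)"
        unfolding split using that Nk by (simp add: y_def)
      also have "\<dots> = (G *\<^sub>v v) $ i"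
        using that v(1) by (simp add: G_def scalar_prod_def atLeast0LessThan)
      finally show ?thesis .
    qed
    then have "(Q *\<^sub>v (F *\<^sub>v w)) $ i = 0" if "i \<in> {d..<N}" for i
      using that Gv Nk B_mult[OF y, folded w_def] by (metis atLeastLessThan_iff
          index_zero_vec(1) le_add_diff_inverse less_diff_conv2 add.commute)
    then have "F *\<^sub>v (F *\<^sub>v w) = 0\<^sub>v N" using ker[of "F *\<^sub>v w"] F w by simp
    then have "F *\<^sub>v w = 0\<^sub>v N" by (rule symmetric_mat_kernel_square[OF F sym w])
    moreover have "Q *\<^sub>v w = y"
      using Q P y by (simp add: w_def assoc_mult_mat_vec[symmetric] QP)
    ultimately have "y $ (d+i) = 0" if "i < k" for i
      using ker[OF w] that Nk by auto
    then have "v = 0\<^sub>v k" using v(1) Nk by (intro eq_vecI) (auto simp: y_def)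
    then show False using v(2) by simp
  qed
  then have "Polynomial.order 0 (char_poly G) = 0" by (rule order_0I)
  moreover have "Polynomial.order 0 (monom (1::real) d) = d"
    using order_power_n_n[of "0::real" d] by (simp add: x_as_monom monom_power)
  moreover have "char_poly G \<noteq> 0" using \<open>poly (char_poly G) 0 \<noteq> 0\<close> by auto
  ultimately show ?thesis unfolding char_poly_F by (simp add: order_mult)
qed

lemma order_zero_char_poly_periodic_kernel:
  fixes F :: "real mat"
  assumes F: "F \<in> carrier_mat N N" and sym: "transpose_mat F = F" and dN: "0 < d" "d \<le> N"
    and ker: "\<And>x. x \<in> carrier_vec N \<Longrightarrow> F *\<^sub>v x = 0\<^sub>v N \<longleftrightarrow> (\<forall>q<N. x $ q = x $ (q mod d))"
  shows "Polynomial.order 0 (char_poly F) = d"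
proof -
  define P where "P = mat N N (\<lambda>(i,l). (if l = i mod d then 1 else 0) + (if d \<le> i \<and> l = i then 1 else (0::real)))"
  define Q where "Q = mat N N (\<lambda>(i,l). (if l = i then 1 else 0) - (if d \<le> i \<and> l = i mod d then 1 else (0::real)))"
  have P: "P \<in> carrier_mat N N" and Q: "Q \<in> carrier_mat N N" by (simp_all add: P_def Q_def)
  have mod_in_range: "i mod d < N" for i using dN by (meson less_le_trans mod_less_divisor)
  have delta: "(\<Sum>l<N. (if l = a then 1 else 0) * f l) = f a" if "a < N" for a and f :: "nat \<Rightarrow> real"
    using that by (simp add: if_distrib[of "\<lambda>t. t * _"] sum.delta cong: if_cong)
  have PQ: "P * Q = 1\<^sub>m N"
  proof (rule eq_matI)
    fix i j assume "i < dim_row (1\<^sub>m N)" "j < dim_col (1\<^sub>m N)"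
    then have i: "i < N" and j: "j < N" by auto
    have "(P * Q) $$ (i,j) = (\<Sum>l<N. (if l = i mod d then 1 else 0) * Q $$ (l,j))
        + (\<Sum>l<N. (if d \<le> i \<and> l = i then 1 else 0) * Q $$ (l,j))"
      using P Q i j by (simp add: scalar_prod_def atLeast0LessThan P_def distrib_right sum.distrib)
    also have "\<dots> = Q $$ (i mod d, j) + (if d \<le> i then Q $$ (i,j) else 0)"
      using i mod_in_range by (cases "d \<le> i") (simp_all add: delta)
    also have "\<dots> = 1\<^sub>m N $$ (i,j)"
      using i j dN mod_in_range[of i] mod_less_divisor[OF dN(1), of i] by (auto simp: Q_def)
    finally show "(P * Q) $$ (i,j) = 1\<^sub>m N $$ (i,j)" .
  qed (use P Q in auto)
  have QP: "Q * P = 1\<^sub>m N"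
  proof (rule eq_matI)
    fix i j assume "i < dim_row (1\<^sub>m N)" "j < dim_col (1\<^sub>m N)"
    then have i: "i < N" and j: "j < N" by auto
    have "(Q * P) $$ (i,j) = (\<Sum>l<N. (if l = i then 1 else 0) * P $$ (l,j))
        - (\<Sum>l<N. (if d \<le> i \<and> l = i mod d then 1 else 0) * P $$ (l,j))"
      using P Q i j by (simp add: scalar_prod_def atLeast0LessThan Q_def left_diff_distrib sum_subtractf)
    also have "\<dots> = P $$ (i,j) - (if d \<le> i then P $$ (i mod d, j) else 0)"
      using i mod_in_range by (cases "d \<le> i") (simp_all add: delta)
    also have "\<dots> = 1\<^sub>m N $$ (i,j)"
      using i j dN mod_in_range[of i] mod_less_divisor[OF dN(1), of i] by (auto simp: P_def)
    finally show "(Q * P) $$ (i,j) = 1\<^sub>m N $$ (i,j)" .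
  qed (use P Q in auto)
  have Q_mult: "(Q *\<^sub>v x) $ i = x $ i - x $ (i mod d)" if "x \<in> carrier_vec N" "d \<le> i" "i < N" for x i
  proof -
    have "(Q *\<^sub>v x) $ i = (\<Sum>l<N. (if l = i then 1 else 0) * x $ l)
        - (\<Sum>l<N. (if l = i mod d then 1 else 0) * x $ l)"
      using Q that by (simp add: scalar_prod_def atLeast0LessThan Q_def left_diff_distrib sum_subtractf)
    then show ?thesis using that mod_in_range by (simp add: delta)
  qed
  show ?thesis
  proof (rule order_zero_char_poly_symmetric[OF F sym P Q PQ QP dN(2)])
    fix x :: "real vec" assume x: "x \<in> carrier_vec N"
    have "(\<forall>q<N. x $ q = x $ (q mod d)) \<longleftrightarrow> (\<forall>i\<in>{d..<N}. (Q *\<^sub>v x) $ i = 0)"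
      using x by (auto simp: Q_mult)
    then show "F *\<^sub>v x = 0\<^sub>v N \<longleftrightarrow> (\<forall>i\<in>{d..<N}. (Q *\<^sub>v x) $ i = 0)" using ker[OF x] by simp
  qed
qed

definition formation_matrix :: "nat \<Rightarrow> nat \<Rightarrow> (nat \<times> nat) list \<Rightarrow> (nat \<times> nat) set \<Rightarrow> real vec \<Rightarrow> real mat" where
  "formation_matrix d n E Eo p = transpose_mat (rigidity_matrix d n E p) * rigidity_matrix d n E p
     + kron (laplacian n Eo) (1\<^sub>m d)"

lemma kron_laplacian_carrier: "kron (laplacian n Eo) (1\<^sub>m d) \<in> carrier_mat (n*d) (n*d)"
  by (simp add: kron_def laplacian_def)

lemma formation_matrix_carrier: "formation_matrix d n E Eo p \<in> carrier_mat (n*d) (n*d)"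
  unfolding formation_matrix_def using rigidity_matrix_carrier kron_laplacian_carrier by simp

lemma transpose_formation_matrix:
  "transpose_mat (formation_matrix d n E Eo p) = formation_matrix d n E Eo p"
proof -
  have R: "rigidity_matrix d n E p \<in> carrier_mat (length E) (n*d)" by (rule rigidity_matrix_carrier)
  then have RR: "transpose_mat (rigidity_matrix d n E p) * rigidity_matrix d n E p \<in> carrier_mat (n*d) (n*d)"
    by simp
  show ?thesis unfolding formation_matrix_def transpose_add[OF RR kron_laplacian_carrier]
    transpose_mult[OF transpose_carrier_mat[THEN iffD2, OF R] R] transpose_kron_one transpose_laplacian by simp
qed

lemma formation_matrix_mult_vec:
  assumes x: "x \<in> carrier_vec (n*d)"
  shows "formation_matrix d n E Eo p *\<^sub>v x = transpose_mat (rigidity_matrix d n E p) *\<^sub>v (rigidity_matrix d n E p *\<^sub>v x)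
     + kron (laplacian n Eo) (1\<^sub>m d) *\<^sub>v x"
proof -
  have R: "rigidity_matrix d n E p \<in> carrier_mat (length E) (n*d)" by (rule rigidity_matrix_carrier)
  have RT: "transpose_mat (rigidity_matrix d n E p) \<in> carrier_mat (n*d) (length E)" using R by simp
  show ?thesis unfolding formation_matrix_def
    add_mult_distrib_mat_vec[OF mult_carrier_mat[OF RT R] kron_laplacian_carrier x]
    assoc_mult_mat_vec[OF RT R x] ..
qed

lemma formation_matrix_quadratic_form:
  assumes x: "x \<in> carrier_vec (n*d)"
  shows "x \<bullet> (formation_matrix d n E Eo p *\<^sub>v x) = (rigidity_matrix d n E p *\<^sub>v x) \<bullet> (rigidity_matrix d n E p *\<^sub>v x)
    + (\<Sum>a<d. \<Sum>i<n. x $ (i*d + a) * (\<Sum>j<n. laplacian n Eo $$ (i,j) * x $ (j*d + a)))"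
proof -
  let ?R = "rigidity_matrix d n E p"
  have R: "?R \<in> carrier_mat (length E) (n*d)" by (rule rigidity_matrix_carrier)
  have Rx: "?R *\<^sub>v x \<in> carrier_vec (length E)" using R x by simp
  have "x \<bullet> (transpose_mat ?R *\<^sub>v (?R *\<^sub>v x)) = (?R *\<^sub>v x) \<bullet> (?R *\<^sub>v x)"
    using comm_scalar_prod[OF x, of "transpose_mat ?R *\<^sub>v (?R *\<^sub>v x)"] transpose_vec_mult_scalar[OF R x Rx] R Rx
    by simp
  then show ?thesis unfolding formation_matrix_mult_vec[OF x] kron_laplacian_quadratic_form[OF x, symmetric]
    using R x kron_laplacian_carrier[of n Eo d] by (subst scalar_prod_add_distrib[of _ "n*d"]) auto
qed

lemma scalar_prod_self_nonneg: "0 \<le> (v :: real vec) \<bullet> v"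
  unfolding scalar_prod_def by (intro sum_nonneg) auto

lemma psd_formation_matrix: "psd (formation_matrix d n E Eo p)"
  unfolding psd_def
proof (intro conjI ballI)
  fix x :: "real vec" assume "x \<in> carrier_vec (dim_row (formation_matrix d n E Eo p))"
  then have x: "x \<in> carrier_vec (n*d)" using formation_matrix_carrier[of d n E Eo p] by simp
  show "0 \<le> x \<bullet> (formation_matrix d n E Eo p *\<^sub>v x)"
    unfolding formation_matrix_quadratic_form[OF x]
    by (intro add_nonneg_nonneg scalar_prod_self_nonneg sum_nonneg laplacian_quadratic_form_nonneg)
qed (use formation_matrix_carrier[of d n E Eo p] transpose_formation_matrix in auto)

lemma formation_matrix_kernelD:
  assumes x: "x \<in> carrier_vec (n*d)" and Fx: "formation_matrix d n E Eo p *\<^sub>v x = 0\<^sub>v (n*d)"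
  shows "rigidity_matrix d n E p *\<^sub>v x = 0\<^sub>v (length E)"
    and "\<And>i j. i < n \<Longrightarrow> j < n \<Longrightarrow> adj_o Eo i j \<Longrightarrow> agent_pos d x i = agent_pos d x j"
proof -
  let ?R = "rigidity_matrix d n E p"
  let ?L = "\<lambda>a. \<Sum>i<n. x $ (i*d + a) * (\<Sum>j<n. laplacian n Eo $$ (i,j) * x $ (j*d + a))"
  have "(?R *\<^sub>v x) \<bullet> (?R *\<^sub>v x) + (\<Sum>a<d. ?L a) = 0"
    using formation_matrix_quadratic_form[OF x, of E Eo p] Fx x by simp
  moreover have "0 \<le> ?L a" for a by (rule laplacian_quadratic_form_nonneg)
  ultimately have R0: "(?R *\<^sub>v x) \<bullet> (?R *\<^sub>v x) = 0" and L0: "\<forall>a<d. ?L a = 0"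
    using scalar_prod_self_nonneg[of "?R *\<^sub>v x"] sum_nonneg[of "{..<d}" ?L]
    by (simp_all add: add_nonneg_eq_0_iff sum_nonneg_eq_0_iff)
  show "?R *\<^sub>v x = 0\<^sub>v (length E)"
    by (rule scalar_prod_self_eq_0[OF _ R0]) (use x rigidity_matrix_carrier[of d n E p] in simp)
  fix i j assume ij: "i < n" "j < n" "adj_o Eo i j"
  show "agent_pos d x i = agent_pos d x j"
  proof (rule eq_vecI)
    fix a assume "a < dim_vec (agent_pos d x j)"
    then have a: "a < d" by simp
    have "x $ (i*d + a) = x $ (j*d + a)"
      using laplacian_quadratic_form_eq_0[where y = "\<lambda>i. x $ (i*d + a)", OF _ ij] L0 a by simp
    then show "agent_pos d x i $ a = agent_pos d x j $ a" by (simp add: agent_pos_index a)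
  qed simp
qed

lemma formation_matrix_mult_translation:
  assumes "edges_wf n E" "c \<in> carrier_vec d"
  shows "formation_matrix d n E Eo p *\<^sub>v translation n d c = 0\<^sub>v (n*d)"
  unfolding formation_matrix_mult_vec[OF translation_carrier]
    rigidity_matrix_mult_translation[OF assms] kron_laplacian_mult_translation[OF assms(2)]
  using rigidity_matrix_carrier[of d n E p] by (intro eq_vecI) (auto simp: scalar_prod_def)

locale star_anchored_formation =
  fixes d n i0 :: nat and E :: "(nat \<times> nat) list" and Eo :: "(nat \<times> nat) set" and p :: "real vec"
  assumes dim: "d = 2 \<or> d = 3"
    and edges: "edges_wf n E"
    and Eo_edges: "\<forall>(i,j) \<in> Eo. (i,j) \<in> set E \<or> (j,i) \<in> set E"
    and rigid: "inf_rigid d n E p"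
    and i0: "i0 < n"
    and star: "\<forall>(i,j) \<in> Eo. i = i0 \<or> j = i0"
    and planar_anchor: "d = 2 \<Longrightarrow> \<exists>(a,b) \<in> Eo. agent_pos 2 p a \<noteq> agent_pos 2 p b"
    and spatial_anchor: "d = 3 \<Longrightarrow> \<exists>(a,b) \<in> Eo. \<exists>(a',b') \<in> Eo.
      lin_indep2 (agent_pos 3 p b - agent_pos 3 p a) (agent_pos 3 p b' - agent_pos 3 p a')"
begin

lemma d_pos: "0 < d"
  using dim by auto

lemma Eo_wf: "(a,b) \<in> Eo \<Longrightarrow> a < n \<and> b < n \<and> a \<noteq> b"
  using Eo_edges edges unfolding edges_wf_def by fastforce

lemma pinned_infinitesimal_motion_is_translation:
  assumes x: "x \<in> carrier_vec (n*d)" and Rx: "rigidity_matrix d n E p *\<^sub>v x = 0\<^sub>v (length E)"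
    and Eo_x: "\<And>a b. (a,b) \<in> Eo \<Longrightarrow> agent_pos d x a = agent_pos d x b"
  shows "x = translation n d (agent_pos d x i0)"
proof -
  define c where "c = agent_pos d x i0"
  define y where "y = x - translation n d c"
  have c: "c \<in> carrier_vec d" by (simp add: c_def)
  have y: "y \<in> carrier_vec (n*d)" using x by (simp add: y_def)
  have Ry: "rigidity_matrix d n E p *\<^sub>v y = 0\<^sub>v (length E)"
    using rigidity_matrix_carrier[of d n E p] x Rx rigidity_matrix_mult_translation[OF edges c]
    by (simp add: y_def mult_minus_distrib_mat_vec)
  have y_pinned: "agent_pos d y a = 0\<^sub>v d \<and> agent_pos d y b = 0\<^sub>v d" if "(a,b) \<in> Eo" for a b
  proof -
    have "agent_pos d x a = c \<and> agent_pos d x b = c"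
      using Eo_x[OF that] star that unfolding c_def by auto
    then show ?thesis using Eo_wf[OF that] x c
      by (simp add: y_def agent_pos_minus agent_pos_translation)
  qed
  from dim have y0: "y = 0\<^sub>v (n*d)"
  proof
    assume d: "d = 2"
    then obtain a b where ab: "(a,b) \<in> Eo" "agent_pos 2 p a \<noteq> agent_pos 2 p b"
      using planar_anchor by auto
    show ?thesis
      using planar_pinned_motion_zero[OF edges _ _ _ _ _ ab(2)] rigid y Ry y_pinned[OF ab(1)] Eo_wf[OF ab(1)] d
      by simp
  next
    assume d: "d = 3"
    then obtain a b a' b' where ab: "(a,b) \<in> Eo" "(a',b') \<in> Eo"
      and indep: "lin_indep2 (agent_pos 3 p b - agent_pos 3 p a) (agent_pos 3 p b' - agent_pos 3 p a')"
      using spatial_anchor by auto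
    show ?thesis
      using spatial_pinned_motion_zero[OF edges _ _ _ _ _ _ _ indep] rigid y Ry
        y_pinned[OF ab(1)] y_pinned[OF ab(2)] Eo_wf[OF ab(1)] Eo_wf[OF ab(2)] d
      by simp
  qed
  then show ?thesis using x unfolding y_def c_def by (simp add: minus_vec_eq_0_iff)
qed

lemma translations_in_kernels:
  assumes "c \<in> carrier_vec d"
  shows "rigidity_matrix d n E p *\<^sub>v translation n d c = 0\<^sub>v (length E)"
    and "formation_matrix d n E Eo p *\<^sub>v translation n d c = 0\<^sub>v (n*d)"
    and "kron (incidence n E) (1\<^sub>m d) *\<^sub>v translation n d c = 0\<^sub>v (length E * d)"
proof -
  show "rigidity_matrix d n E p *\<^sub>v translation n d c = 0\<^sub>v (length E)"
    by (rule rigidity_matrix_mult_translation[OF edges assms])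
  show "formation_matrix d n E Eo p *\<^sub>v translation n d c = 0\<^sub>v (n*d)"
    by (rule formation_matrix_mult_translation[OF edges assms])
  have "edge_vec d E (translation n d c) k = 0\<^sub>v d" if "k < length E" for k
    unfolding translation_def using assms by (subst edge_vec_stack_agents[OF edges that]) auto
  then show "kron (incidence n E) (1\<^sub>m d) *\<^sub>v translation n d c = 0\<^sub>v (length E * d)"
    unfolding incidence_kron_mult_vec[OF edges translation_carrier] using d_pos
    by (intro eq_vecI) (simp_all add: stack_agents_def less_mult_imp_div_less)
qed

lemma kernel_formation_matrix:
  "mat_kernel (formation_matrix d n E Eo p) = {translation n d c | c. c \<in> carrier_vec d}"
proof (intro equalityI subsetI)
  fix x assume "x \<in> mat_kernel (formation_matrix d n E Eo p)"
  then have x: "x \<in> carrier_vec (n*d)" and Fx: "formation_matrix d n E Eo p *\<^sub>v x = 0\<^sub>v (n*d)"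
    unfolding mat_kernel[OF formation_matrix_carrier] by auto
  have "agent_pos d x a = agent_pos d x b" if "(a,b) \<in> Eo" for a b
    using formation_matrix_kernelD(2)[OF x Fx] Eo_wf[OF that] that by (simp add: adj_o_def)
  then have "x = translation n d (agent_pos d x i0)"
    by (rule pinned_infinitesimal_motion_is_translation[OF x formation_matrix_kernelD(1)[OF x Fx]])
  then show "x \<in> {translation n d c | c. c \<in> carrier_vec d}" using agent_pos_carrier by blast
qed (auto simp: mat_kernel[OF formation_matrix_carrier] translations_in_kernels)

lemma kernel_incidence_kron:
  "mat_kernel (kron (incidence n E) (1\<^sub>m d)) = {translation n d c | c. c \<in> carrier_vec d}"
proof (intro equalityI subsetI)
  fix x assume "x \<in> mat_kernel (kron (incidence n E) (1\<^sub>m d))"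
  then have x: "x \<in> carrier_vec (n*d)" and Mx: "kron (incidence n E) (1\<^sub>m d) *\<^sub>v x = 0\<^sub>v (length E * d)"
    unfolding mat_kernel[OF incidence_kron_carrier] by auto
  have edge: "edge_vec d E x k = 0\<^sub>v d" if "k < length E" for k
  proof (rule eq_vecI)
    fix a assume "a < dim_vec (0\<^sub>v d :: real vec)"
    then have "(kron (incidence n E) (1\<^sub>m d) *\<^sub>v x) $ (k*d + a) = 0"
      using Mx block_index_less[OF that] by simp
    then show "edge_vec d E x k $ a = 0\<^sub>v d $ a"
      using \<open>a < _\<close> block_index_less[OF that]
      by (simp add: incidence_kron_mult_vec[OF edges x] stack_agents_index[OF that])
  qed simp
  have Rx: "rigidity_matrix d n E p *\<^sub>v x = 0\<^sub>v (length E)"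
    unfolding rigidity_matrix_mult_vec[OF edges x]
  proof (rule eq_vecI)
    fix k assume "k < dim_vec (0\<^sub>v (length E) :: real vec)"
    then show "vec (length E) (\<lambda>k. edge_vec d E p k \<bullet> edge_vec d E x k) $ k = 0\<^sub>v (length E) $ k"
      using edge[of k] by simp
  qed simp
  have "agent_pos d x a = agent_pos d x b" if "(a,b) \<in> Eo" for a b
  proof -
    have "(a,b) \<in> set E \<or> (b,a) \<in> set E" using Eo_edges that by blast
    then obtain k where k: "k < length E" "E ! k = (a,b) \<or> E ! k = (b,a)"
      unfolding in_set_conv_nth by blast
    then show ?thesis using edge[OF k(1)] by (auto simp: edge_vec_def minus_vec_eq_0_iff)
  qed
  then have "x = translation n d (agent_pos d x i0)"
    by (rule pinned_infinitesimal_motion_is_translation[OF x Rx])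
  then show "x \<in> {translation n d c | c. c \<in> carrier_vec d}" using agent_pos_carrier by blast
qed (auto simp: mat_kernel[OF incidence_kron_carrier] translations_in_kernels)

lemma order_zero_char_poly_formation_matrix:
  "Polynomial.order 0 (char_poly (formation_matrix d n E Eo p)) = d"
proof (rule order_zero_char_poly_periodic_kernel[OF formation_matrix_carrier transpose_formation_matrix])
  show "0 < d" "d \<le> n*d" using d_pos i0 by auto
  fix x :: "real vec" assume "x \<in> carrier_vec (n*d)"
  then show "formation_matrix d n E Eo p *\<^sub>v x = 0\<^sub>v (n*d) \<longleftrightarrow> (\<forall>q<n*d. x $ q = x $ (q mod d))"
    using kernel_formation_matrix translations_eq_periodic[of n d]
    unfolding mat_kernel[OF formation_matrix_carrier] by blast
qed

end

theorem lemma5: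
  fixes d n i0 :: nat and E :: "(nat \<times> nat) list" and Eo :: "(nat \<times> nat) set"
    and dist :: "nat \<Rightarrow> nat \<Rightarrow> real" and dv :: "nat \<Rightarrow> nat \<Rightarrow> real vec"
    and pt :: "real vec"
  assumes d: "d = 2 \<or> d = 3" and n: "n \<ge> 2"
    and E_wf: "\<forall>(i,j) \<in> set E. i < n \<and> j < n \<and> i \<noteq> j"
    and E_simple: "distinct (map (\<lambda>(i,j). {i,j}) E)"
    and dist_sym: "\<forall>i j. dist i j = dist j i"
    and dist_pos: "\<forall>(i,j) \<in> set E. dist i j > 0"
    and Eo_sub: "\<forall>(i,j) \<in> Eo. (i,j) \<in> set E \<or> (j,i) \<in> set E"
    and dv_dim: "\<forall>(i,j) \<in> Eo. dv i j \<in> carrier_vec d"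
    and dv_norm: "\<forall>(i,j) \<in> Eo. vnorm (dv i j) = dist i j"
    and pt_dim: "pt \<in> carrier_vec (d * n)"
    and pt_dist: "\<forall>(i,j) \<in> set E. vnorm (agent_pos d pt i - agent_pos d pt j) = dist i j"
    and pt_orient: "\<forall>(i,j) \<in> Eo. agent_pos d pt j - agent_pos d pt i = dv i j"
    and rigid: "inf_rigid d n E pt"
    and i0: "i0 < n"
    and Eo_star: "\<forall>(i,j) \<in> Eo. i = i0 \<or> j = i0"
    and Eo_2: "d = 2 \<longrightarrow> Eo \<noteq> {}"
    and Eo_3: "d = 3 \<longrightarrow> (\<exists>a b a' b'. (a,b) \<in> Eo \<and> (a',b') \<in> Eo \<and> i0 \<in> {a,b} \<and> i0 \<in> {a',b'} \<and>
                     lin_indep2 (dv a b) (dv a' b'))"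
  shows "let R = rigidity_matrix d n E pt;
             F = transpose_mat R * R + kron (laplacian n Eo) (1\<^sub>m d)
         in psd F \<and> Polynomial.order 0 (char_poly F) = d \<and>
            mat_kernel F = mat_kernel (kron (incidence n E) (1\<^sub>m d)) \<and>
            mat_kernel F = {ones_kron_I n d *\<^sub>v c | c. c \<in> carrier_vec d}"
proof -
  have planar_anchor: "\<exists>(a,b) \<in> Eo. agent_pos 2 pt a \<noteq> agent_pos 2 pt b" if d2: "d = 2"
  proof -
    obtain a b where ab: "(a,b) \<in> Eo" using Eo_2 d2 by auto
    have "0 < vnorm (agent_pos d pt a - agent_pos d pt b) \<or> 0 < vnorm (agent_pos d pt b - agent_pos d pt a)"
      using Eo_sub ab dist_pos pt_dist by fastforce
    then have "agent_pos d pt a \<noteq> agent_pos d pt b"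
      by (auto simp: vnorm_def minus_cancel_vec[OF agent_pos_carrier])
    then show ?thesis using ab d2 by blast
  qed
  have spatial_anchor: "\<exists>(a,b) \<in> Eo. \<exists>(a',b') \<in> Eo.
      lin_indep2 (agent_pos 3 pt b - agent_pos 3 pt a) (agent_pos 3 pt b' - agent_pos 3 pt a')" if d3: "d = 3"
  proof -
    obtain a b a' b' where ab: "(a,b) \<in> Eo" "(a',b') \<in> Eo" and indep: "lin_indep2 (dv a b) (dv a' b')"
      using Eo_3 d3 by blast
    moreover have "dv a b = agent_pos 3 pt b - agent_pos 3 pt a" "dv a' b' = agent_pos 3 pt b' - agent_pos 3 pt a'"
      using pt_orient ab d3 by auto
    ultimately show ?thesis by auto
  qed
  interpret star_anchored_formation d n i0 E Eo pt
    using d E_wf Eo_sub rigid i0 Eo_star planar_anchor spatial_anchor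
    by unfold_locales (auto simp: edges_wf_def)
  show ?thesis
    unfolding Let_def formation_matrix_def[symmetric] ones_kron_I_range
    using psd_formation_matrix order_zero_char_poly_formation_matrix
      kernel_formation_matrix kernel_incidence_kron by simp
qed

end
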